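(* Let $s\ge4$, $j\in\{s,\dots,p\}$, $M>0$, $\gamma\in(0,1)$ and $\tilde a=\sqrt{M^2/(2+\gamma^2)}$. Define $\beta^*=(\tfrac{\tilde a}{\sqrt{s-2}},\dots,\tfrac{\tilde a}{\sqrt{s-2}},\tilde a,0,\dots,0)+\tilde a\gamma e_j$ (first $s-2$ entries equal to $\tilde a/\sqrt{s-2}$, entry $s-1$ equal to $\tilde a$), $\Sigma_0=I_p-\gamma(e_{s-1}e_j^\top+e_je_{s-1}^\top)$, and $\beta_1=\beta^*-2\tilde a\gamma e_j$, $\Sigma_1=I_p+\gamma(e_{s-1}e_j^\top+e_je_{s-1}^\top)$. In the model where $x\sim N_p(0,\Sigma)$, $y=x^\top\beta+\varepsilon$ with $\varepsilon\sim N(0,\sigma_\varepsilon^2)$ independent, and each coordinate of $x$ is independently observed with probability $\rho_*$, let $p(y,x_{\mathrm{obs}};\beta,\Sigma)$ denote the joint likelihood of the observation pattern and the observed data $(y,x_{\mathrm{obs}})$. Then $p(y,x_{\mathrm{obs}};\beta^*,\Sigma_0)=p(y,x_{\mathrm{obs}};\beta_1,\Sigma_1)$ for every observation pattern in which $x_{s-1}$ and $x_j$ are not both observed (and all values of $y,x_{\mathrm{obs}}$).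
   Context: $e_k$ denotes the $k$-th standard basis vector of $\mathbb R^p$. The missingness is independent of $(x,\varepsilon)$. *)

theory Defs
  imports "Jordan_Normal_Form.Determinant"
begin

text \<open>Coordinates of x are indexed 1..p; vectors are nat => real, matrices nat => nat => real
  (only entries with indices in 1..p matter).\<close>

definition gauss_density :: "real mat \<Rightarrow> real vec \<Rightarrow> real" where
  "gauss_density C v =
     (let d = dim_row C;
          Ci = (SOME B. B \<in> carrier_mat d d \<and> inverts_mat C B \<and> inverts_mat B C)
      in (2 * pi) powr (- real d / 2) * det C powr (- 1 / 2)
         * exp (- 1 / 2 * (\<Sum>a<d. \<Sum>b<d. v $ a * Ci $$ (a, b) * v $ b)))"

text \<open>Covariance matrix of the observed vector (y, x_O) (y first, then the observed
  coordinates in increasing order) under x ~ N_p(0,Sigma), y = x'beta + eps,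
  eps ~ N(0, sigma^2) independent of x.\<close>
definition obs_cov :: "nat \<Rightarrow> (nat \<Rightarrow> real) \<Rightarrow> (nat \<Rightarrow> nat \<Rightarrow> real) \<Rightarrow> real \<Rightarrow> nat set \<Rightarrow> real mat" where
  "obs_cov p \<beta> \<Sigma> \<sigma> Ob =
     (let l = sorted_list_of_set Ob in
      mat (card Ob + 1) (card Ob + 1) (\<lambda>(a, b).
        if a = 0 \<and> b = 0 then (\<Sum>i\<in>{1..p}. \<Sum>k\<in>{1..p}. \<beta> i * \<Sigma> i k * \<beta> k) + \<sigma>\<^sup>2
        else if a = 0 then (\<Sum>k\<in>{1..p}. \<Sigma> (l ! (b - 1)) k * \<beta> k)
        else if b = 0 then (\<Sum>k\<in>{1..p}. \<Sigma> (l ! (a - 1)) k * \<beta> k)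
        else \<Sigma> (l ! (a - 1)) (l ! (b - 1))))"

definition obs_vec :: "real \<Rightarrow> (nat \<Rightarrow> real) \<Rightarrow> nat set \<Rightarrow> real vec" where
  "obs_vec y xo Ob =
     (let l = sorted_list_of_set Ob in
      vec (card Ob + 1) (\<lambda>a. if a = 0 then y else xo (l ! (a - 1))))"

text \<open>Joint likelihood of the observation pattern Ob (set of observed coordinates, a subset of
  1..p; each coordinate observed independently with probability rho) and the observed data
  (y, x_obs), x_obs given as the values xo i for i in Ob.\<close>
definition likelihood :: "nat \<Rightarrow> real \<Rightarrow> real \<Rightarrow> (nat \<Rightarrow> real) \<Rightarrow> (nat \<Rightarrow> nat \<Rightarrow> real)
    \<Rightarrow> nat set \<Rightarrow> real \<Rightarrow> (nat \<Rightarrow> real) \<Rightarrow> real" where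
  "likelihood p \<sigma> \<rho> \<beta> \<Sigma> Ob y xo =
     \<rho> ^ card Ob * (1 - \<rho>) ^ (p - card Ob) * gauss_density (obs_cov p \<beta> \<Sigma> \<sigma> Ob) (obs_vec y xo Ob)"

end

theory Submission
  imports Defs
begin

text \<open>The likelihood of a pattern sees \<open>(\<beta>, \<Sigma>)\<close> only through the observed block of \<open>\<Sigma>\<close>,
  the observed entries of \<open>\<Sigma>\<beta>\<close> and the variance \<open>\<beta>\<^sup>T\<Sigma>\<beta>\<close>. Both \<open>\<Sigma>\<^sub>0\<close> and \<open>\<Sigma>\<^sub>1\<close> are
  \<open>I \<plusminus> \<gamma>(e\<^sub>s\<^sub>-\<^sub>1e\<^sub>j\<^sup>T + e\<^sub>je\<^sub>s\<^sub>-\<^sub>1\<^sup>T)\<close>, so their observed blocks agree as long as \<open>x\<^sub>s\<^sub>-\<^sub>1\<close> and \<open>x\<^sub>j\<close>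
  are not both observed. Since \<open>\<beta>\<^sup>*\<^sub>j = \<gamma>\<beta>\<^sup>*\<^sub>s\<^sub>-\<^sub>1\<close> and \<open>\<beta>\<^sub>1\<close> is \<open>\<beta>\<^sup>*\<close> with its \<open>j\<close>-th entry negated,
  \<open>\<Sigma>\<^sub>0\<beta>\<^sup>* = \<Sigma>\<^sub>1\<beta>\<^sub>1\<close>, and this common vector vanishes at \<open>j\<close>, the only coordinate where
  \<open>\<beta>\<^sup>*\<close> and \<open>\<beta>\<^sub>1\<close> differ; hence the variances agree as well.\<close>

definition coupling_mat :: "'a::ring_1 \<Rightarrow> 'i \<Rightarrow> 'i \<Rightarrow> 'i \<Rightarrow> 'i \<Rightarrow> 'a" where
  "coupling_mat c u v = (\<lambda>i k. (if i = k then 1 else 0)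
     + c * ((if i = u \<and> k = v then 1 else 0) + (if i = v \<and> k = u then 1 else 0)))"

lemma coupling_mat_mult:
  assumes "finite A" "u \<in> A" "v \<in> A" "u \<noteq> v"
  shows "(\<Sum>k\<in>A. coupling_mat c u v i k * f k)
    = (if i \<in> A then f i else 0) + (if i = u then c * f v else if i = v then c * f u else 0)"
proof -
  have "coupling_mat c u v i k * f k
      = (if k = i then f k else 0) + (if i = u \<and> k = v then c * f k else 0)
        + (if i = v \<and> k = u then c * f k else 0)" for k
    using \<open>u \<noteq> v\<close> by (auto simp: coupling_mat_def algebra_simps)
  then have "(\<Sum>k\<in>A. coupling_mat c u v i k * f k)
      = (\<Sum>k\<in>A. if k = i then f k else 0) + (\<Sum>k\<in>A. if i = u \<and> k = v then c * f k else 0)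
        + (\<Sum>k\<in>A. if i = v \<and> k = u then c * f k else 0)"
    by (simp add: sum.distrib)
  then show ?thesis
    using assms by (cases "i = u"; cases "i = v") simp_all
qed

lemma coupling_mat_off_pair:
  "\<not> (i = u \<and> k = v) \<Longrightarrow> \<not> (i = v \<and> k = u) \<Longrightarrow> coupling_mat c u v i k = coupling_mat c' u v i k"
  unfolding coupling_mat_def by (simp only: if_not_P if_False add_0_right mult_zero_right)

lemma coupling_mat_mult_reflect:
  fixes \<beta> :: "'i \<Rightarrow> 'a::comm_ring_1"
  assumes "finite A" "u \<in> A" "v \<in> A" "u \<noteq> v" and \<beta>_v: "\<beta> v = c * \<beta> u"
  shows "(\<Sum>k\<in>A. coupling_mat (- c) u v i k * \<beta> k)
       = (\<Sum>k\<in>A. coupling_mat c u v i k * (\<beta>(v := - \<beta> v)) k)"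
    and "(\<Sum>k\<in>A. coupling_mat (- c) u v v k * \<beta> k) = 0"
  using assms by (auto simp: coupling_mat_mult)

lemma quad_form_eq_inner:
  fixes \<beta> :: "'i \<Rightarrow> 'a::semiring_0"
  shows "(\<Sum>i\<in>A. \<Sum>k\<in>A. \<beta> i * \<Sigma> i k * \<beta> k) = (\<Sum>i\<in>A. \<beta> i * (\<Sum>k\<in>A. \<Sigma> i k * \<beta> k))"
  by (simp add: sum_distrib_left ac_simps)

lemma quad_form_eqI:
  fixes \<beta> \<beta>' :: "'i \<Rightarrow> 'a::semiring_0"
  assumes mult_eq: "\<And>i. i \<in> A \<Longrightarrow> (\<Sum>k\<in>A. \<Sigma> i k * \<beta> k) = (\<Sum>k\<in>A. \<Sigma>' i k * \<beta>' k)"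
    and mult_zero: "\<And>i. i \<in> A \<Longrightarrow> \<beta> i \<noteq> \<beta>' i \<Longrightarrow> (\<Sum>k\<in>A. \<Sigma> i k * \<beta> k) = 0"
  shows "(\<Sum>i\<in>A. \<Sum>k\<in>A. \<beta> i * \<Sigma> i k * \<beta> k) = (\<Sum>i\<in>A. \<Sum>k\<in>A. \<beta>' i * \<Sigma>' i k * \<beta>' k)"
  unfolding quad_form_eq_inner
proof (rule sum.cong)
  fix i assume "i \<in> A"
  then show "\<beta> i * (\<Sum>k\<in>A. \<Sigma> i k * \<beta> k) = \<beta>' i * (\<Sum>k\<in>A. \<Sigma>' i k * \<beta>' k)"
    using mult_eq mult_zero by (metis mult_zero_right)
qed simp

lemma nth_sorted_list_of_set_mem:
  "n < card A \<Longrightarrow> sorted_list_of_set A ! n \<in> A"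
  by (metis card.infinite length_sorted_list_of_set not_less0 nth_mem set_sorted_list_of_set)

lemma obs_cov_eqI:
  assumes "\<And>i k. i \<in> Ob \<Longrightarrow> k \<in> Ob \<Longrightarrow> \<Sigma> i k = \<Sigma>' i k"
    and "\<And>i. i \<in> Ob \<Longrightarrow> (\<Sum>k\<in>{1..p}. \<Sigma> i k * \<beta> k) = (\<Sum>k\<in>{1..p}. \<Sigma>' i k * \<beta>' k)"
    and "(\<Sum>i\<in>{1..p}. \<Sum>k\<in>{1..p}. \<beta> i * \<Sigma> i k * \<beta> k)
       = (\<Sum>i\<in>{1..p}. \<Sum>k\<in>{1..p}. \<beta>' i * \<Sigma>' i k * \<beta>' k)"
  shows "obs_cov p \<beta> \<Sigma> \<sigma> Ob = obs_cov p \<beta>' \<Sigma>' \<sigma> Ob"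
  unfolding obs_cov_def Let_def
  by (rule eq_matI) (use assms nth_sorted_list_of_set_mem[of _ Ob] in auto)

theorem lemma8:
  fixes s j p :: nat and M \<gamma> a \<sigma> \<rho> :: real
    and \<beta>s \<beta>1 :: "nat \<Rightarrow> real" and \<Sigma>0 \<Sigma>1 :: "nat \<Rightarrow> nat \<Rightarrow> real"
    and Ob :: "nat set" and y :: real and xo :: "nat \<Rightarrow> real"
  assumes "s \<ge> 4" and "s \<le> j" and "j \<le> p"
    and "M > 0" and "0 < \<gamma>" and "\<gamma> < 1"
    and "\<sigma> > 0" and "0 \<le> \<rho>" and "\<rho> \<le> 1"
    and a_def: "a = sqrt (M\<^sup>2 / (2 + \<gamma>\<^sup>2))"
    and \<beta>s_def: "\<beta>s = (\<lambda>i. (if 1 \<le> i \<and> i \<le> s - 2 then a / sqrt (real (s - 2))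
                          else if i = s - 1 then a else 0)
                         + (if i = j then a * \<gamma> else 0))"
    and \<Sigma>0_def: "\<Sigma>0 = (\<lambda>i k. (if i = k then 1 else 0)
            - \<gamma> * ((if i = s - 1 \<and> k = j then 1 else 0) + (if i = j \<and> k = s - 1 then 1 else 0)))"
    and \<beta>1_def: "\<beta>1 = (\<lambda>i. \<beta>s i - (if i = j then 2 * a * \<gamma> else 0))"
    and \<Sigma>1_def: "\<Sigma>1 = (\<lambda>i k. (if i = k then 1 else 0)
            + \<gamma> * ((if i = s - 1 \<and> k = j then 1 else 0) + (if i = j \<and> k = s - 1 then 1 else 0)))"
    and "Ob \<subseteq> {1..p}"
    and "\<not> (s - 1 \<in> Ob \<and> j \<in> Ob)"
  shows "likelihood p \<sigma> \<rho> \<beta>s \<Sigma>0 Ob y xo = likelihood p \<sigma> \<rho> \<beta>1 \<Sigma>1 Ob y xo"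
proof -
  have idx: "s - 1 \<in> {1..p}" "j \<in> {1..p}" "s - 1 \<noteq> j"
    using assms(1-3) by auto
  have \<Sigma>0_coupling: "\<Sigma>0 = coupling_mat (- \<gamma>) (s - 1) j"
    and \<Sigma>1_coupling: "\<Sigma>1 = coupling_mat \<gamma> (s - 1) j"
    unfolding \<Sigma>0_def \<Sigma>1_def coupling_mat_def by (auto intro!: ext)
  have \<beta>s_j: "\<beta>s j = \<gamma> * \<beta>s (s - 1)"
    using assms(1,2) unfolding \<beta>s_def by auto
  have \<beta>1_reflect: "\<beta>1 = \<beta>s(j := - \<beta>s j)"
    using assms(1,2) unfolding \<beta>1_def \<beta>s_def by auto
  have mult_eq: "(\<Sum>k\<in>{1..p}. \<Sigma>0 i k * \<beta>s k) = (\<Sum>k\<in>{1..p}. \<Sigma>1 i k * \<beta>1 k)" for i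
    unfolding \<Sigma>0_coupling \<Sigma>1_coupling \<beta>1_reflect
    by (rule coupling_mat_mult_reflect(1)[OF _ idx \<beta>s_j]) simp
  have mult_j: "(\<Sum>k\<in>{1..p}. \<Sigma>0 j k * \<beta>s k) = 0"
    unfolding \<Sigma>0_coupling by (rule coupling_mat_mult_reflect(2)[OF _ idx \<beta>s_j]) simp
  have mult_zero: "(\<Sum>k\<in>{1..p}. \<Sigma>0 i k * \<beta>s k) = 0" if "\<beta>s i \<noteq> \<beta>1 i" for i
    using that mult_j unfolding \<beta>1_reflect by (cases "i = j") simp_all
  have "obs_cov p \<beta>s \<Sigma>0 \<sigma> Ob = obs_cov p \<beta>1 \<Sigma>1 \<sigma> Ob"
  proof (rule obs_cov_eqI)
    fix i k assume "i \<in> Ob" "k \<in> Ob"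
    then show "\<Sigma>0 i k = \<Sigma>1 i k"
      unfolding \<Sigma>0_coupling \<Sigma>1_coupling using assms(16) by (intro coupling_mat_off_pair) auto
  next
    show "(\<Sum>i\<in>{1..p}. \<Sum>k\<in>{1..p}. \<beta>s i * \<Sigma>0 i k * \<beta>s k)
        = (\<Sum>i\<in>{1..p}. \<Sum>k\<in>{1..p}. \<beta>1 i * \<Sigma>1 i k * \<beta>1 k)"
      by (rule quad_form_eqI) (rule mult_eq, rule mult_zero)
  qed (rule mult_eq)
  then show ?thesis
    unfolding likelihood_def by simp
qed

end
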